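(* Let $f:\Omega_D\to\mathbb{O}$ be a function of class $C^2$. Then $f$ is a slice function if and only if, on $\Omega_D\setminus\mathbb{R}$, for all $m,n\in\{1,\dots,7\}$ with $m<n$, $L_{mn}\big(\mathrm{Im}^{-1}\Gamma(f)\big)=0$ and $L_{mn}\big(f-\tfrac16\Gamma(f)\big)=0$, where $\mathrm{Im}^{-1}\Gamma(f)$ denotes the function $x\mapsto\mathrm{Im}(x)^{-1}(\Gamma(f)(x))$ on $\Omega_D\setminus\mathbb{R}$.
   Context: Octonions $\mathbb{O}=\mathbb{H}+\ell\mathbb{H}$ with product $(a+\ell b)(c+\ell d)=(ac-d\bar b)+\ell(\bar a d+cb)$; real basis $(1,e_1,\dots,e_7)=(1,i,j,k,\ell,\ell i,\ell j,\ell k)$, $x=x_0+\sum_{h=1}^7x_he_h$, $\mathrm{Im}(x)=\sum_{h=1}^7x_he_h$. $\mathbb{S}=\{I\in\mathbb{O}:I^2=-1\}$. $D\subset\mathbb{R}^2$ non-empty open, invariant under $(\alpha,\beta)\mapsto(\alpha,-\beta)$, $\Omega_D=\{\alpha+\beta I:(\alpha,\beta)\in D,I\in\mathbb{S}\}$, assumed connected. $f:\Omega_D\to\mathbb{O}$ is a slice function if $f(\alpha+\beta I)=F_1(\alpha,\beta)+IF_2(\alpha,\beta)$ for all $(\alpha,\beta)\in D$, $I\in\mathbb{S}$, for some $(F_1,F_2):D\to\mathbb{O}^2$ with $F_1$ even and $F_2$ odd in $\beta$. For $m<n$, $L_{mn}=x_m\frac{\partial}{\partial x_n}-x_n\frac{\partial}{\partial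 x_m}$, and $\Gamma(f)(x)=-\sum_{1\le m<n\le7}e_m\big(e_n\,L_{mn}(f)(x)\big)$. *)

theory Defs
  imports "HOL-Analysis.Analysis"
begin

text \<open>Octonions are modelled as real^8 with coordinates x_0,...,x_7 w.r.t. the
real basis (1,i,j,k,l,li,lj,lk). The Euclidean norm of real^8 is the octonion norm.
Octonion multiplication is defined by the Cayley-Dickson formula
(a + l b)(c + l d) = (a c - d conj b) + l (conj a d + c b) on quaternion pairs.\<close>

type_synonym oct = "real^8"

definition oidx :: "nat \<Rightarrow> 8" where "oidx h = of_nat h"

definition ebas :: "nat \<Rightarrow> oct" where "ebas h = axis (oidx h) 1"

definition comp :: "oct \<Rightarrow> nat \<Rightarrow> real" where "comp x h = x $ oidx h"

text \<open>Quaternions as coefficient functions on 0..3 (basis 1,i,j,k).\<close>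
definition hmul :: "(nat \<Rightarrow> real) \<Rightarrow> (nat \<Rightarrow> real) \<Rightarrow> nat \<Rightarrow> real" where
  "hmul p q h =
     (if h = 0 then p 0 * q 0 - p 1 * q 1 - p 2 * q 2 - p 3 * q 3
      else if h = 1 then p 0 * q 1 + p 1 * q 0 + p 2 * q 3 - p 3 * q 2
      else if h = 2 then p 0 * q 2 - p 1 * q 3 + p 2 * q 0 + p 3 * q 1
      else if h = 3 then p 0 * q 3 + p 1 * q 2 - p 2 * q 1 + p 3 * q 0
      else 0)"

definition hconj :: "(nat \<Rightarrow> real) \<Rightarrow> nat \<Rightarrow> real" where
  "hconj p h = (if h = 0 then p 0 else - p h)"

definition omul :: "oct \<Rightarrow> oct \<Rightarrow> oct" where
  "omul x y =
    (let a = (\<lambda>h. comp x h); b = (\<lambda>h. comp x (h + 4));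
         c = (\<lambda>h. comp y h); d = (\<lambda>h. comp y (h + 4));
         u = (\<lambda>h. hmul a c h - hmul d (hconj b) h);
         v = (\<lambda>h. hmul (hconj a) d h + hmul c b h)
     in (\<Sum>h<4. u h *\<^sub>R ebas h) + (\<Sum>h<4. v h *\<^sub>R ebas (h + 4)))"

definition oIm :: "oct \<Rightarrow> oct" where
  "oIm x = (\<Sum>h\<in>{1..7}. comp x h *\<^sub>R ebas h)"

definition oconj :: "oct \<Rightarrow> oct" where
  "oconj x = comp x 0 *\<^sub>R ebas 0 - oIm x"

definition oinv :: "oct \<Rightarrow> oct" where
  "oinv x = (1 / (norm x)\<^sup>2) *\<^sub>R oconj x"

definition SS :: "oct set" where "SS = {I. omul I I = - ebas 0}"

definition oreals :: "oct set" where "oreals = {x. \<exists>r::real. x = r *\<^sub>R ebas 0}"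

definition OmegaD :: "(real \<times> real) set \<Rightarrow> oct set" where
  "OmegaD D = {x. \<exists>\<alpha> \<beta> I. (\<alpha>, \<beta>) \<in> D \<and> I \<in> SS \<and> x = \<alpha> *\<^sub>R ebas 0 + \<beta> *\<^sub>R I}"

definition slice_function :: "(real \<times> real) set \<Rightarrow> (oct \<Rightarrow> oct) \<Rightarrow> bool" where
  "slice_function D f \<longleftrightarrow>
     (\<exists>F1 F2 :: real \<times> real \<Rightarrow> oct.
        (\<forall>\<alpha> \<beta>. (\<alpha>, \<beta>) \<in> D \<longrightarrow> F1 (\<alpha>, - \<beta>) = F1 (\<alpha>, \<beta>) \<and> F2 (\<alpha>, - \<beta>) = - F2 (\<alpha>, \<beta>)) \<and>
        (\<forall>\<alpha> \<beta> I. (\<alpha>, \<beta>) \<in> D \<longrightarrow> I \<in> SS \<longrightarrow>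
            f (\<alpha> *\<^sub>R ebas 0 + \<beta> *\<^sub>R I) = F1 (\<alpha>, \<beta>) + omul I (F2 (\<alpha>, \<beta>))))"

definition pd :: "nat \<Rightarrow> (oct \<Rightarrow> oct) \<Rightarrow> oct \<Rightarrow> oct" where
  "pd n g x = frechet_derivative g (at x) (ebas n)"

definition C2_on :: "oct set \<Rightarrow> (oct \<Rightarrow> oct) \<Rightarrow> bool" where
  "C2_on U f \<longleftrightarrow>
     (\<forall>x\<in>U. f differentiable (at x)) \<and>
     (\<forall>i<8. \<forall>x\<in>U. pd i f differentiable (at x)) \<and>
     (\<forall>i<8. \<forall>j<8. continuous_on U (pd j (pd i f)))"

definition Lop :: "nat \<Rightarrow> nat \<Rightarrow> (oct \<Rightarrow> oct) \<Rightarrow> oct \<Rightarrow> oct" where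
  "Lop m n g x = comp x m *\<^sub>R pd n g x - comp x n *\<^sub>R pd m g x"

definition Gamma :: "(oct \<Rightarrow> oct) \<Rightarrow> oct \<Rightarrow> oct" where
  "Gamma f x = - (\<Sum>m\<in>{1..7}. \<Sum>n\<in>{m<..7}. omul (ebas m) (omul (ebas n) (Lop m n f x)))"

end

theory Submission
  imports Defs
begin

(* Off the real axis, Omega_D is the union of the spheres alpha + r S (r > 0), and the rotations in
   the coordinate planes (e_m, e_n), 1 <= m < n, move along these spheres with velocity field
   x_m e_n - x_n e_m, which is exactly the direction differentiated by L_mn. Every point of
   alpha + r S can be rotated to alpha + r e_1 in the planes (e_1, e_n), so a differentiable
   function is constant on the spheres iff its L_mn-derivatives vanish there.
   For a slice function, f = F_1 + Im(x) X on alpha + r S with X = F_2(alpha, r) / r, hence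
   L_mn f = (x_m e_n - x_n e_m) X, and the relations e_m (e_m y) = - y and
   e_m (e_n (e_m y)) = e_n y for m <> n turn Gamma(f) into 6 Im(x) X. So f - Gamma(f)/6 = F_1
   and Im(x)^-1 Gamma(f) = 6 X are constant on the spheres. Conversely, if these two functions
   are constant on the spheres, f = (f - Gamma(f)/6) + Im(x) (Im(x)^-1 Gamma(f)) / 6 exhibits f
   as a slice function. *)

section \<open>Coordinates and the multiplication table\<close>

lemma UNIV_8_eq: "(UNIV :: 8 set) = oidx ` {..<8}"
proof -
  have e: "oidx ` {..<8} = {0,1,2,3,4,5,6,7::8}"
    by (simp add: oidx_def lessThan_nat_numeral lessThan_Suc insert_commute)
  have "card (oidx ` {..<8}) = CARD(8)" unfolding e by simp
  then show ?thesis using card_subset_eq[of UNIV "oidx ` {..<8}"] by simp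
qed

lemma inj_on_oidx: "inj_on oidx {..<8}"
  by (rule eq_card_imp_inj_on) (simp_all flip: UNIV_8_eq)

lemma oct_eq_iff:
  "x = y \<longleftrightarrow> comp x 0 = comp y 0 \<and> comp x 1 = comp y 1 \<and> comp x 2 = comp y 2 \<and> comp x 3 = comp y 3
     \<and> comp x 4 = comp y 4 \<and> comp x 5 = comp y 5 \<and> comp x 6 = comp y 6 \<and> comp x 7 = comp y 7"
  (is "_ \<longleftrightarrow> ?coordinates")
proof -
  have "x = y \<longleftrightarrow> (\<forall>i\<in>oidx ` {..<8}. x $ i = y $ i)"
    by (simp add: vec_eq_iff flip: UNIV_8_eq)
  also have "\<dots> \<longleftrightarrow> (\<forall>k<8. comp x k = comp y k)"
    by (auto simp: comp_def)
  also have "\<dots> \<longleftrightarrow> ?coordinates"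
    by (simp add: numeral_eq_Suc All_less_Suc conj_comms)
  finally show ?thesis .
qed

lemma comp_ebas: "h < 8 \<Longrightarrow> k < 8 \<Longrightarrow> comp (ebas h) k = (if h = k then 1 else 0)"
  using inj_on_oidx by (simp add: comp_def ebas_def axis_def inj_on_eq_iff)

lemma comp_add [simp]: "comp (x + y) k = comp x k + comp y k"
  and comp_diff [simp]: "comp (x - y) k = comp x k - comp y k"
  and comp_minus [simp]: "comp (- x) k = - comp x k"
  and comp_scaleR [simp]: "comp (a *\<^sub>R x) k = a * comp x k"
  and comp_zero [simp]: "comp 0 k = 0"
  and comp_sum [simp]: "comp (sum f A) k = (\<Sum>i\<in>A. comp (f i) k)"
  by (simp_all add: comp_def)

lemma bounded_linear_comp: "bounded_linear (\<lambda>x. comp x k)"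
  unfolding comp_def by (rule bounded_linear_vec_nth)

lemma sum_lessThan_8: "(\<Sum>k<(8::nat). f k) = f 0 + f 1 + f 2 + f 3 + f 4 + f 5 + f 6 + f 7"
  by (simp add: eval_nat_numeral)

lemma sum_atLeastAtMost_1_7: "(\<Sum>h\<in>{1..7::nat}. f h) = f 1 + f 2 + f 3 + f 4 + f 5 + f 6 + f 7"
  by (simp add: eval_nat_numeral atLeastAtMostSuc_conv add_ac)

(* Keeps the index 1 a numeral; otherwise simp rewrites comp x 1 to comp x (Suc 0) and the
   coordinate formulas below no longer apply. *)
declare One_nat_def [simp del]

lemma inner_oct: "inner x y = (\<Sum>k<8. comp x k * comp y k)"
  by (simp add: inner_vec_def UNIV_8_eq sum.reindex[OF inj_on_oidx] comp_def)

lemma norm_oct_squared: "(norm x)\<^sup>2 = (\<Sum>k<8. (comp x k)\<^sup>2)"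
  unfolding power2_norm_eq_inner inner_oct by (simp add: power2_eq_square)

lemma comp_omul:
  "comp (omul x y) 0 =
     comp x 0 * comp y 0 - comp x 1 * comp y 1 - comp x 2 * comp y 2 - comp x 3 * comp y 3
     - comp x 4 * comp y 4 - comp x 5 * comp y 5 - comp x 6 * comp y 6 - comp x 7 * comp y 7"
  "comp (omul x y) 1 =
     comp x 0 * comp y 1 + comp x 1 * comp y 0 + comp x 2 * comp y 3 - comp x 3 * comp y 2
     - comp x 4 * comp y 5 + comp x 5 * comp y 4 - comp x 6 * comp y 7 + comp x 7 * comp y 6"
  "comp (omul x y) 2 =
     comp x 0 * comp y 2 - comp x 1 * comp y 3 + comp x 2 * comp y 0 + comp x 3 * comp y 1
     - comp x 4 * comp y 6 + comp x 5 * comp y 7 + comp x 6 * comp y 4 - comp x 7 * comp y 5"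
  "comp (omul x y) 3 =
     comp x 0 * comp y 3 + comp x 1 * comp y 2 - comp x 2 * comp y 1 + comp x 3 * comp y 0
     - comp x 4 * comp y 7 - comp x 5 * comp y 6 + comp x 6 * comp y 5 + comp x 7 * comp y 4"
  "comp (omul x y) 4 =
     comp x 0 * comp y 4 + comp x 1 * comp y 5 + comp x 2 * comp y 6 + comp x 3 * comp y 7
     + comp x 4 * comp y 0 - comp x 5 * comp y 1 - comp x 6 * comp y 2 - comp x 7 * comp y 3"
  "comp (omul x y) 5 =
     comp x 0 * comp y 5 - comp x 1 * comp y 4 - comp x 2 * comp y 7 + comp x 3 * comp y 6
     + comp x 4 * comp y 1 + comp x 5 * comp y 0 - comp x 6 * comp y 3 + comp x 7 * comp y 2"
  "comp (omul x y) 6 =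
     comp x 0 * comp y 6 + comp x 1 * comp y 7 - comp x 2 * comp y 4 - comp x 3 * comp y 5
     + comp x 4 * comp y 2 + comp x 5 * comp y 3 + comp x 6 * comp y 0 - comp x 7 * comp y 1"
  "comp (omul x y) 7 =
     comp x 0 * comp y 7 - comp x 1 * comp y 6 + comp x 2 * comp y 5 - comp x 3 * comp y 4
     + comp x 4 * comp y 3 - comp x 5 * comp y 2 + comp x 6 * comp y 1 + comp x 7 * comp y 0"
  unfolding omul_def Let_def
  by (simp_all add: lessThan_nat_numeral One_nat_def comp_ebas hmul_def hconj_def algebra_simps)

lemma bounded_bilinear_omul: "bounded_bilinear omul"
proof -
  have "omul (x + y) z = omul x z + omul y z" "omul z (x + y) = omul z x + omul z y"
    "omul (a *\<^sub>R x) z = a *\<^sub>R omul x z" "omul z (a *\<^sub>R x) = a *\<^sub>R omul z x" for x y z a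
    by (simp_all add: oct_eq_iff comp_omul algebra_simps)
  then show ?thesis
    unfolding bilinear_conv_bounded_bilinear[symmetric] bilinear_def by (auto intro!: linearI)
qed

interpretation omul: bounded_bilinear omul
  by (rule bounded_bilinear_omul)

section \<open>Imaginary units\<close>

lemma comp_oIm: "k < 8 \<Longrightarrow> comp (oIm x) k = (if k = 0 then 0 else comp x k)"
proof -
  assume k: "k < 8"
  have "comp (oIm x) k = (\<Sum>h\<in>{1..7}. if h = k then comp x h else 0)"
    unfolding oIm_def comp_sum comp_scaleR using k by (intro sum.cong) (auto simp: comp_ebas)
  then show ?thesis using k by auto
qed

lemma comp_oIm_0 [simp]: "comp (oIm x) 0 = 0"
  by (simp add: comp_oIm)

lemma bounded_linear_oIm: "bounded_linear oIm"
  unfolding oIm_def[abs_def]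
  by (intro bounded_linear_sum
      bounded_linear_compose[OF bounded_linear_scaleR_left bounded_linear_comp])

lemmas oIm_add = linear_add[OF bounded_linear.linear[OF bounded_linear_oIm]]
  and oIm_minus = linear_neg[OF bounded_linear.linear[OF bounded_linear_oIm]]
  and oIm_scaleR = linear_scale[OF bounded_linear.linear[OF bounded_linear_oIm]]

lemma oct_Re_Im_decomp: "x = comp x 0 *\<^sub>R ebas 0 + oIm x"
  by (simp add: oct_eq_iff comp_oIm comp_ebas)

lemma oIm_eq_self: "comp a 0 = 0 \<Longrightarrow> oIm a = a"
  by (simp add: oct_eq_iff comp_oIm)

lemma oIm_oIm [simp]: "oIm (oIm x) = oIm x"
  by (simp add: oIm_eq_self)

lemma oIm_ebas_0 [simp]: "oIm (ebas 0) = 0"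
  by (simp add: oct_eq_iff comp_oIm comp_ebas)

lemma norm_oIm_squared: "(norm (oIm x))\<^sup>2 = (\<Sum>k\<in>{1..7}. (comp x k)\<^sup>2)"
  by (simp add: norm_oct_squared sum_lessThan_8 sum_atLeastAtMost_1_7 comp_oIm)

lemma omul_imag_twice: "comp a 0 = 0 \<Longrightarrow> omul a (omul a x) = - ((norm a)\<^sup>2) *\<^sub>R x"
  unfolding norm_oct_squared sum_lessThan_8
  by (simp add: oct_eq_iff comp_omul algebra_simps power2_eq_square)

lemma oinv_imag: "comp a 0 = 0 \<Longrightarrow> oinv a = - (1 / (norm a)\<^sup>2) *\<^sub>R a"
  by (simp add: oinv_def oconj_def oIm_eq_self)

lemma omul_oinv_imag:
  assumes "comp a 0 = 0" and "a \<noteq> 0"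
  shows "omul (oinv a) (omul a x) = x" and "omul a (omul (oinv a) x) = x"
  using assms
  by (simp_all add: oinv_imag omul.scaleR_left omul.scaleR_right omul.minus_left omul.minus_right
      omul_imag_twice)

lemma omul_self: "omul x x = ((comp x 0)\<^sup>2 - (norm (oIm x))\<^sup>2) *\<^sub>R ebas 0 + (2 * comp x 0) *\<^sub>R oIm x"
  unfolding norm_oIm_squared sum_atLeastAtMost_1_7
  by (simp add: oct_eq_iff comp_omul comp_oIm comp_ebas algebra_simps power2_eq_square)

lemma SS_iff: "I \<in> SS \<longleftrightarrow> comp I 0 = 0 \<and> norm I = 1"
proof
  assume "I \<in> SS"
  then have sq: "((comp I 0)\<^sup>2 - (norm (oIm I))\<^sup>2) *\<^sub>R ebas 0 + (2 * comp I 0) *\<^sub>R oIm I = - ebas 0"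
    by (simp add: SS_def omul_self)
  have re: "(comp I 0)\<^sup>2 - (norm (oIm I))\<^sup>2 = -1"
    using arg_cong[OF sq, of "\<lambda>v. comp v 0"] by (simp add: comp_ebas)
  have im: "comp I 0 *\<^sub>R oIm I = 0"
    using arg_cong[OF sq, of oIm] by (simp add: oIm_add oIm_scaleR oIm_minus)
  have "comp I 0 = 0"
  proof (rule ccontr)
    assume "comp I 0 \<noteq> 0"
    with im re have "(comp I 0)\<^sup>2 = -1" by simp
    then show False using zero_le_power2[of "comp I 0"] by linarith
  qed
  with re show "comp I 0 = 0 \<and> norm I = 1"
    using norm_ge_zero[of I] by (auto simp: oIm_eq_self power2_eq_1_iff)
next
  assume "comp I 0 = 0 \<and> norm I = 1"
  then show "I \<in> SS"
    by (simp add: SS_def omul_self oIm_eq_self)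
qed

lemma omul_imag_anticommute:
  assumes "comp a 0 = 0" and "comp b 0 = 0"
  shows "omul a (omul b x) + omul b (omul a x) = - (2 * inner a b) *\<^sub>R x"
proof -
  have "omul (a + b) (omul (a + b) x)
      = omul a (omul a x) + omul b (omul b x) + (omul a (omul b x) + omul b (omul a x))"
    by (simp add: omul.add_left omul.add_right algebra_simps)
  moreover have "(norm (a + b))\<^sup>2 = (norm a)\<^sup>2 + 2 * inner a b + (norm b)\<^sup>2"
    by (simp add: power2_norm_eq_inner inner_add_left inner_add_right inner_commute)
  ultimately show ?thesis
    using omul_imag_twice[of "a + b" x] omul_imag_twice[of a x] omul_imag_twice[of b x] assms
    by (simp add: algebra_simps)
qed

lemma inner_ebas: "m < 8 \<Longrightarrow> n < 8 \<Longrightarrow> inner (ebas m) (ebas n) = (if m = n then 1 else 0)"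
  by (simp add: ebas_def inner_axis_axis inj_on_eq_iff[OF inj_on_oidx])

lemma norm_ebas [simp]: "norm (ebas m) = 1"
  by (simp add: ebas_def)

lemma omul_ebas_ebas: "1 \<le> m \<Longrightarrow> m < 8 \<Longrightarrow> omul (ebas m) (omul (ebas m) x) = - x"
  using omul_imag_twice[of "ebas m" x] by (simp add: comp_ebas)

lemma omul_ebas_ebas_ebas:
  assumes "1 \<le> m" "m < 8" "1 \<le> n" "n < 8" "m \<noteq> n"
  shows "omul (ebas m) (omul (ebas n) (omul (ebas m) x)) = omul (ebas n) x"
proof -
  have "omul (ebas m) (omul (ebas n) y) = - omul (ebas n) (omul (ebas m) y)" for y
    using omul_imag_anticommute[of "ebas m" "ebas n" y] assms
    by (simp add: comp_ebas inner_ebas eq_neg_iff_add_eq_0)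
  then show ?thesis
    using omul_ebas_ebas[of m x] assms by (simp add: omul.minus_right)
qed

section \<open>The operator Gamma\<close>

lemma sum_pairs_atLeastAtMost_1_7:
  fixes a :: "nat \<Rightarrow> oct"
  shows "(\<Sum>m\<in>{1..7}. \<Sum>n\<in>{m<..7}. a m + a n) = 6 *\<^sub>R (\<Sum>h\<in>{1..7}. a h)"
proof -
  have "(\<Sum>m\<in>{1..7}. \<Sum>n\<in>{m<..7}. c m + c n) = 6 * (\<Sum>h\<in>{1..7}. c h)" for c :: "nat \<Rightarrow> real"
    by (simp add: sum_atLeastAtMost_1_7 sum.atLeast_Suc_atMost
        flip: atLeastSucAtMost_greaterThanAtMost)
  then show ?thesis
    by (simp add: oct_eq_iff)
qed

lemma Gamma_eq_if_Lop_eq: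
  assumes Lop: "\<And>m n. 1 \<le> m \<Longrightarrow> m < n \<Longrightarrow> n \<le> 7 \<Longrightarrow>
      Lop m n f w = omul (comp w m *\<^sub>R ebas n - comp w n *\<^sub>R ebas m) X"
  shows "Gamma f w = 6 *\<^sub>R omul (oIm w) X"
proof -
  define a where "a h = comp w h *\<^sub>R omul (ebas h) X" for h
  have pair: "omul (ebas m) (omul (ebas n) (Lop m n f w)) = - (a m + a n)"
    if "m \<in> {1..7}" "n \<in> {m<..7}" for m n
    using that Lop[of m n] omul_ebas_ebas[of n X] omul_ebas_ebas_ebas[of m n X]
    by (simp add: a_def omul.diff_left omul.diff_right omul.scaleR_left omul.scaleR_right
        omul.minus_right)
  have "Gamma f w = - (\<Sum>m\<in>{1..7}. \<Sum>n\<in>{m<..7}. - (a m + a n))"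
    unfolding Gamma_def using pair by (intro arg_cong[where f = uminus] sum.cong refl) auto
  also have "\<dots> = 6 *\<^sub>R (\<Sum>h\<in>{1..7}. a h)"
    by (simp only: sum_negf minus_minus sum_pairs_atLeastAtMost_1_7)
  also have "\<dots> = 6 *\<^sub>R omul (oIm w) X"
    by (simp add: oIm_def omul.sum_left omul.scaleR_left a_def)
  finally show ?thesis .
qed

lemma differentiable_comp [simp]: "(\<lambda>x. comp x k) differentiable (at w)"
  by (rule bounded_linear_imp_differentiable[OF bounded_linear_comp])

lemma differentiable_omul:
  "f differentiable (at w) \<Longrightarrow> g differentiable (at w) \<Longrightarrow> (\<lambda>y. omul (f y) (g y)) differentiable (at w)"
  unfolding differentiable_def using omul.FDERIV by blast

lemma differentiable_oinv: "a \<noteq> 0 \<Longrightarrow> oinv differentiable (at a)"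
proof -
  assume "a \<noteq> 0"
  have "(\<lambda>x. inverse (inner x x) *\<^sub>R (comp x 0 *\<^sub>R ebas 0 - oIm x)) differentiable (at a)"
    using \<open>a \<noteq> 0\<close> bounded_linear_imp_differentiable[OF bounded_linear_oIm]
    by (intro differentiable_scaleR differentiable_inverse differentiable_inner differentiable_diff
        differentiable_comp differentiable_const differentiable_ident) auto
  moreover have "oinv = (\<lambda>x. inverse (inner x x) *\<^sub>R (comp x 0 *\<^sub>R ebas 0 - oIm x))"
    by (simp add: fun_eq_iff oinv_def oconj_def power2_norm_eq_inner divide_inverse)
  ultimately show ?thesis by simp
qed

lemma differentiable_Lop:
  "pd m f differentiable (at w) \<Longrightarrow> pd n f differentiable (at w) \<Longrightarrow> Lop m n f differentiable (at w)"
  unfolding Lop_def[abs_def]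
  by (intro differentiable_diff differentiable_scaleR differentiable_comp)

lemma differentiable_Gamma:
  "(\<And>i. i < 8 \<Longrightarrow> pd i f differentiable (at w)) \<Longrightarrow> Gamma f differentiable (at w)"
  unfolding Gamma_def[abs_def]
  by (intro differentiable_minus differentiable_sum ballI finite_atLeastAtMost
      finite_greaterThanAtMost differentiable_omul differentiable_const differentiable_Lop) auto

lemma differentiable_Im_inverse_Gamma:
  assumes "\<And>i. i < 8 \<Longrightarrow> pd i f differentiable (at w)" and "oIm w \<noteq> 0"
  shows "(\<lambda>y. omul (oinv (oIm y)) (Gamma f y)) differentiable (at w)"
  using assms bounded_linear_imp_differentiable[OF bounded_linear_oIm]
  by (intro differentiable_omul differentiable_Gamma differentiable_compose[of oinv oIm]
      differentiable_oinv) auto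

lemma differentiable_minus_Gamma:
  assumes "f differentiable (at w)" and "\<And>i. i < 8 \<Longrightarrow> pd i f differentiable (at w)"
  shows "(\<lambda>y. f y - (1/6) *\<^sub>R Gamma f y) differentiable (at w)"
  using assms
  by (intro differentiable_diff differentiable_scaleR differentiable_const differentiable_Gamma)

section \<open>Rotations in coordinate planes\<close>

definition imag_sphere :: "real \<Rightarrow> real \<Rightarrow> oct set" where
  "imag_sphere \<alpha> r = {w. comp w 0 = \<alpha> \<and> norm (oIm w) = r}"

(* Rotation by the angle t in the plane spanned by e_m and e_n. Its velocity at the point x is
   x_m e_n - x_n e_m, the direction in which L_mn differentiates. *)
definition rotation :: "nat \<Rightarrow> nat \<Rightarrow> oct \<Rightarrow> real \<Rightarrow> oct" where
  "rotation m n z t = z + (cos t - 1) *\<^sub>R (comp z m *\<^sub>R ebas m + comp z n *\<^sub>R ebas n)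
     + sin t *\<^sub>R (comp z m *\<^sub>R ebas n - comp z n *\<^sub>R ebas m)"

lemma comp_rotation:
  assumes "j < 8" "m < 8" "n < 8" "m \<noteq> n"
  shows "comp (rotation m n z t) j =
    (if j = m then cos t * comp z m - sin t * comp z n
     else if j = n then cos t * comp z n + sin t * comp z m else comp z j)"
  using assms by (auto simp: rotation_def comp_ebas algebra_simps)

lemma rotation_0 [simp]: "rotation m n z 0 = z"
  by (simp add: rotation_def)

lemma rotation_has_vector_derivative:
  assumes "m < 8" "n < 8" "m \<noteq> n"
  shows "(rotation m n z has_vector_derivative
      comp (rotation m n z t) m *\<^sub>R ebas n - comp (rotation m n z t) n *\<^sub>R ebas m) (at t)"
proof -
  have "(rotation m n z has_vector_derivative
      - sin t *\<^sub>R (comp z m *\<^sub>R ebas m + comp z n *\<^sub>R ebas n)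
      + cos t *\<^sub>R (comp z m *\<^sub>R ebas n - comp z n *\<^sub>R ebas m)) (at t)"
    unfolding rotation_def[abs_def]
    by (auto intro!: derivative_eq_intros simp: has_vector_derivative_def algebra_simps)
  then show ?thesis
    using assms by (simp add: comp_rotation algebra_simps)
qed

lemma sum_cong_except_pair:
  assumes "finite A" "m \<in> A" "n \<in> A" "m \<noteq> n"
    and "\<And>k. k \<in> A \<Longrightarrow> k \<noteq> m \<Longrightarrow> k \<noteq> n \<Longrightarrow> f k = g k" and "f m + f n = g m + g n"
  shows "sum f A = sum g A"
proof -
  have split: "sum h A = sum h (A - {m, n}) + (h m + h n)" for h :: "'a \<Rightarrow> 'b"
    using assms(1-4) sum.subset_diff[of "{m, n}" A h] by simp
  have "sum f (A - {m, n}) = sum g (A - {m, n})"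
    using assms(5) by (intro sum.cong) auto
  then show ?thesis
    using split[of f] split[of g] assms(6) by simp
qed

lemma rotation_in_imag_sphere:
  assumes "1 \<le> m" "m < 8" "1 \<le> n" "n < 8" "m \<noteq> n" and "z \<in> imag_sphere \<alpha> r"
  shows "rotation m n z t \<in> imag_sphere \<alpha> r"
proof -
  have trig: "(cos t * a - sin t * b)\<^sup>2 + (cos t * b + sin t * a)\<^sup>2 = a\<^sup>2 + b\<^sup>2" for a b
  proof -
    have "(cos t * a - sin t * b)\<^sup>2 + (cos t * b + sin t * a)\<^sup>2 = ((sin t)\<^sup>2 + (cos t)\<^sup>2) * (a\<^sup>2 + b\<^sup>2)"
      by algebra
    then show ?thesis by simp
  qed
  have "(\<Sum>k\<in>{1..7}. (comp (rotation m n z t) k)\<^sup>2) = (\<Sum>k\<in>{1..7}. (comp z k)\<^sup>2)"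
    using assms(1-5) by (intro sum_cong_except_pair[of _ m n]) (auto simp: comp_rotation trig)
  then have "norm (oIm (rotation m n z t)) = norm (oIm z)"
    by (simp flip: norm_oIm_squared)
  moreover have "comp (rotation m n z t) 0 = comp z 0"
    using assms(1-5) by (simp add: comp_rotation)
  ultimately show ?thesis
    using assms(6) by (simp add: imag_sphere_def)
qed

lemma Lop_eq_derivative:
  assumes "(g has_derivative g') (at w)"
  shows "Lop m n g w = g' (comp w m *\<^sub>R ebas n - comp w n *\<^sub>R ebas m)"
proof -
  have "pd k g w = g' (ebas k)" for k
    unfolding pd_def using frechet_derivative_at[OF assms] by simp
  with has_derivative_linear[OF assms] show ?thesis
    by (simp add: Lop_def linear_diff linear_scale)
qed

lemma Lop_const [simp]: "Lop m n (\<lambda>_. c) w = 0"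
  using Lop_eq_derivative[OF has_derivative_const] by simp

lemma has_vector_derivative_Lop_rotation:
  assumes "m < 8" "n < 8" "m \<noteq> n" and "g differentiable (at (rotation m n z t))"
  shows "((\<lambda>s. g (rotation m n z s)) has_vector_derivative Lop m n g (rotation m n z t)) (at t)"
proof -
  obtain g' where g': "(g has_derivative g') (at (rotation m n z t))"
    using assms(4) by (auto simp: differentiable_def)
  have "((g \<circ> rotation m n z) has_vector_derivative
      g' (comp (rotation m n z t) m *\<^sub>R ebas n - comp (rotation m n z t) n *\<^sub>R ebas m)) (at t)"
    by (rule vector_derivative_diff_chain_within[OF rotation_has_vector_derivative[OF assms(1-3)]
        has_derivative_at_withinI[OF g']])
  then show ?thesis
    by (simp add: o_def Lop_eq_derivative[OF g'])
qed

lemma Lop_eq_if_eq_on_imag_sphere: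
  assumes "1 \<le> m" "m < 8" "1 \<le> n" "n < 8" "m \<noteq> n" and "w \<in> imag_sphere \<alpha> r"
    and "f differentiable (at w)" "g differentiable (at w)"
    and "\<And>y. y \<in> imag_sphere \<alpha> r \<Longrightarrow> f y = g y"
  shows "Lop m n f w = Lop m n g w"
proof -
  have "(\<lambda>s. f (rotation m n w s)) = (\<lambda>s. g (rotation m n w s))"
    using assms rotation_in_imag_sphere by auto
  then show ?thesis
    using has_vector_derivative_Lop_rotation[of m n f w 0]
      has_vector_derivative_Lop_rotation[of m n g w 0] assms vector_derivative_unique_at
    by fastforce
qed

lemma rotation_invariant_if_Lop_eq_0:
  assumes "1 \<le> m" "m < 8" "1 \<le> n" "n < 8" "m \<noteq> n" and "z \<in> imag_sphere \<alpha> r"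
    and "\<And>y. y \<in> imag_sphere \<alpha> r \<Longrightarrow> g differentiable (at y) \<and> Lop m n g y = 0"
  shows "g (rotation m n z t) = g z"
proof -
  have "((\<lambda>s. g (rotation m n z s)) has_derivative (\<lambda>h. 0)) (at s)" for s
    using has_vector_derivative_Lop_rotation[of m n g z s] assms
      rotation_in_imag_sphere[OF assms(1-6)]
    by (simp add: has_vector_derivative_def)
  then obtain c where "\<forall>s. g (rotation m n z s) = c"
    using has_derivative_zero_constant[of UNIV "\<lambda>s. g (rotation m n z s)"] by auto
  then show ?thesis
    by (metis rotation_0)
qed

lemma exists_angle_rotating_onto_axis:
  "\<exists>t. cos t * a - sin t * b = sqrt (a\<^sup>2 + b\<^sup>2) \<and> cos t * b + sin t * a = 0"
proof (cases "a = 0 \<and> b = 0")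
  case True
  then show ?thesis by auto
next
  case False
  define \<rho> where "\<rho> = sqrt (a\<^sup>2 + b\<^sup>2)"
  have pos: "a\<^sup>2 + b\<^sup>2 > 0"
    using False by (simp add: sum_power2_gt_zero_iff)
  then have "\<rho> > 0"
    by (simp add: \<rho>_def)
  moreover have "(a / \<rho>)\<^sup>2 + (- b / \<rho>)\<^sup>2 = 1"
    using False pos by (simp add: \<rho>_def power_divide add_divide_distrib[symmetric])
  ultimately obtain t where t: "cos t = a / \<rho>" "sin t = - b / \<rho>"
    using sincos_total_2pi by metis
  have "cos t * a - sin t * b = (a\<^sup>2 + b\<^sup>2) / \<rho>"
    by (simp add: t power2_eq_square add_divide_distrib)
  also have "\<dots> = \<rho>"
    using pos by (simp add: \<rho>_def real_div_sqrt)
  moreover have "cos t * b + sin t * a = 0"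
    by (simp add: t)
  ultimately show ?thesis
    by (auto simp: \<rho>_def)
qed

lemma rotation_clearing_coordinate:
  assumes "2 \<le> n" "n < 8"
  obtains t where "comp (rotation 1 n w t) 1 = sqrt ((comp w 1)\<^sup>2 + (comp w n)\<^sup>2)"
    and "comp (rotation 1 n w t) n = 0"
    and "\<And>j. j < 8 \<Longrightarrow> j \<noteq> 1 \<Longrightarrow> j \<noteq> n \<Longrightarrow> comp (rotation 1 n w t) j = comp w j"
proof -
  obtain t where "cos t * comp w 1 - sin t * comp w n = sqrt ((comp w 1)\<^sup>2 + (comp w n)\<^sup>2)"
      and "cos t * comp w n + sin t * comp w 1 = 0"
    using exists_angle_rotating_onto_axis by blast
  with assms show ?thesis
    by (intro that[of t]) (auto simp: comp_rotation)
qed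

lemma imag_sphere_point_on_ebas_1_axis:
  assumes "w \<in> imag_sphere \<alpha> r" and "0 \<le> comp w 1" and "\<And>j. 1 < j \<Longrightarrow> j \<le> 7 \<Longrightarrow> comp w j = 0"
  shows "w = \<alpha> *\<^sub>R ebas 0 + r *\<^sub>R ebas 1"
proof -
  have "r\<^sup>2 = (comp w 1)\<^sup>2"
    using assms(1,3) norm_oIm_squared[of w] by (simp add: imag_sphere_def sum_atLeastAtMost_1_7)
  moreover have "0 \<le> r"
    using assms(1) by (auto simp: imag_sphere_def)
  ultimately have "comp w 1 = r"
    using assms(2) by (metis power2_eq_iff_nonneg)
  then show ?thesis
    using assms(1,3) by (simp add: oct_eq_iff comp_ebas imag_sphere_def)
qed

lemma rotation_onto_base_point:
  assumes "w \<in> imag_sphere \<alpha> r" and zero: "\<And>j. 1 < j \<Longrightarrow> j \<le> 7 \<Longrightarrow> comp w j = 0"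
  obtains t where "rotation 1 2 w t = \<alpha> *\<^sub>R ebas 0 + r *\<^sub>R ebas 1"
proof -
  obtain t where "comp (rotation 1 2 w t) 1 = sqrt ((comp w 1)\<^sup>2 + (comp w 2)\<^sup>2)"
      and "comp (rotation 1 2 w t) 2 = 0"
      and "\<And>j. j < 8 \<Longrightarrow> j \<noteq> 1 \<Longrightarrow> j \<noteq> 2 \<Longrightarrow> comp (rotation 1 2 w t) j = comp w j"
    using rotation_clearing_coordinate[of 2 w] by auto
  moreover from this zero have "comp (rotation 1 2 w t) j = 0" if "1 < j" "j \<le> 7" for j
    using that by (cases "j = 2") auto
  ultimately have "rotation 1 2 w t = \<alpha> *\<^sub>R ebas 0 + r *\<^sub>R ebas 1"
    using assms(1) by (intro imag_sphere_point_on_ebas_1_axis rotation_in_imag_sphere) auto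
  then show ?thesis ..
qed

lemma rotation_clearing_coordinate_in_imag_sphere:
  assumes "w \<in> imag_sphere \<alpha> r" and "1 \<le> k" "k < 7"
    and zero: "\<And>j. Suc k < j \<Longrightarrow> j \<le> 7 \<Longrightarrow> comp w j = 0"
  obtains t where "rotation 1 (Suc k) w t \<in> imag_sphere \<alpha> r"
    and "\<And>j. k < j \<Longrightarrow> j \<le> 7 \<Longrightarrow> comp (rotation 1 (Suc k) w t) j = 0"
proof -
  have "2 \<le> Suc k" "Suc k < 8"
    using assms(2,3) by auto
  then obtain t where "comp (rotation 1 (Suc k) w t) 1 = sqrt ((comp w 1)\<^sup>2 + (comp w (Suc k))\<^sup>2)"
      and cleared: "comp (rotation 1 (Suc k) w t) (Suc k) = 0"
      and same: "\<And>j. j < 8 \<Longrightarrow> j \<noteq> 1 \<Longrightarrow> j \<noteq> Suc k \<Longrightarrow> comp (rotation 1 (Suc k) w t) j = comp w j"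
    using rotation_clearing_coordinate[of "Suc k" w] by blast
  have "rotation 1 (Suc k) w t \<in> imag_sphere \<alpha> r"
    using assms(1-3) by (intro rotation_in_imag_sphere) auto
  moreover have "comp (rotation 1 (Suc k) w t) j = 0" if "k < j" "j \<le> 7" for j
  proof (cases "j = Suc k")
    case False
    then have "Suc k < j" "j \<noteq> 1" "j < 8"
      using that assms(2) by auto
    then show ?thesis
      using same zero that by simp
  qed (use cleared in simp)
  ultimately show ?thesis ..
qed

lemma const_on_imag_sphere_if_rotation_invariant:
  assumes inv: "\<And>w n t. w \<in> imag_sphere \<alpha> r \<Longrightarrow> 2 \<le> n \<Longrightarrow> n \<le> 7 \<Longrightarrow> g (rotation 1 n w t) = g w"
    and "w \<in> imag_sphere \<alpha> r"
  shows "g w = g (\<alpha> *\<^sub>R ebas 0 + r *\<^sub>R ebas 1)"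
proof -
  have "g w = g (\<alpha> *\<^sub>R ebas 0 + r *\<^sub>R ebas 1)"
    if "w \<in> imag_sphere \<alpha> r" and "\<And>j. k < j \<Longrightarrow> j \<le> 7 \<Longrightarrow> comp w j = 0" and "1 \<le> k" "k \<le> 7"
    for w k
    using that(3,4,1,2)
  proof (induction k arbitrary: w rule: nat_induct_at_least)
    case base
    obtain t where "rotation 1 2 w t = \<alpha> *\<^sub>R ebas 0 + r *\<^sub>R ebas 1"
      using rotation_onto_base_point[OF base(2,3)] by blast
    then show ?case
      using inv[OF base(2), of 2 t] by simp
  next
    case (Suc k)
    then have "k < 7"
      by simp
    with Suc obtain t where "rotation 1 (Suc k) w t \<in> imag_sphere \<alpha> r"
        and "\<And>j. k < j \<Longrightarrow> j \<le> 7 \<Longrightarrow> comp (rotation 1 (Suc k) w t) j = 0"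
      using rotation_clearing_coordinate_in_imag_sphere[of w \<alpha> r k] by blast
    then have "g (rotation 1 (Suc k) w t) = g (\<alpha> *\<^sub>R ebas 0 + r *\<^sub>R ebas 1)"
      using Suc.IH \<open>k < 7\<close> by simp
    then show ?case
      using inv[of w "Suc k" t] Suc.hyps Suc.prems by simp
  qed
  from this[of w 7] assms(2) show ?thesis
    by simp
qed

lemma const_on_imag_sphere_if_Lop_eq_0:
  assumes "\<And>y n. y \<in> imag_sphere \<alpha> r \<Longrightarrow> 2 \<le> n \<Longrightarrow> n \<le> 7 \<Longrightarrow>
      g differentiable (at y) \<and> Lop 1 n g y = 0"
    and "w \<in> imag_sphere \<alpha> r"
  shows "g w = g (\<alpha> *\<^sub>R ebas 0 + r *\<^sub>R ebas 1)"
proof (rule const_on_imag_sphere_if_rotation_invariant[OF _ assms(2)])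
  fix y and n :: nat and t assume "y \<in> imag_sphere \<alpha> r" "2 \<le> n" "n \<le> 7"
  then show "g (rotation 1 n y t) = g y"
    using assms(1) by (intro rotation_invariant_if_Lop_eq_0) auto
qed

section \<open>Slice functions\<close>

lemma Gamma_eq_on_imag_sphere:
  assumes "\<And>y. y \<in> imag_sphere \<alpha> r \<Longrightarrow> f differentiable (at y)"
    and "\<And>y. y \<in> imag_sphere \<alpha> r \<Longrightarrow> f y = A + omul (oIm y) X"
    and "w \<in> imag_sphere \<alpha> r"
  shows "Gamma f w = 6 *\<^sub>R omul (oIm w) X"
proof (rule Gamma_eq_if_Lop_eq)
  fix m n :: nat assume mn: "1 \<le> m" "m < n" "n \<le> 7"
  define h where "h y = A + omul (oIm y) X" for y
  have "bounded_linear (\<lambda>v. omul (oIm v) X)"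
    by (rule bounded_linear_compose[OF omul.bounded_linear_left bounded_linear_oIm])
  then have h': "(h has_derivative (\<lambda>v. omul (oIm v) X)) (at w)"
    using has_derivative_add[OF has_derivative_const bounded_linear_imp_has_derivative]
    by (fastforce simp: h_def[abs_def])
  have "Lop m n f w = Lop m n h w"
    using mn assms h' by (intro Lop_eq_if_eq_on_imag_sphere[of m n w \<alpha> r])
      (auto simp: h_def differentiable_def)
  also have "\<dots> = omul (comp w m *\<^sub>R ebas n - comp w n *\<^sub>R ebas m) X"
    using mn by (simp add: Lop_eq_derivative[OF h'] oIm_eq_self comp_ebas)
  finally show "Lop m n f w = omul (comp w m *\<^sub>R ebas n - comp w n *\<^sub>R ebas m) X" .
qed

lemma mem_oreals_iff: "x \<in> oreals \<longleftrightarrow> oIm x = 0"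
  using oct_Re_Im_decomp[of x] by (auto simp: oreals_def oIm_scaleR)

lemma mem_OmegaD_iff:
  assumes sym: "\<And>\<alpha> \<beta>. (\<alpha>, \<beta>) \<in> D \<Longrightarrow> (\<alpha>, - \<beta>) \<in> D"
  shows "x \<in> OmegaD D \<longleftrightarrow> (comp x 0, norm (oIm x)) \<in> D"
proof
  assume "x \<in> OmegaD D"
  then obtain \<alpha> \<beta> I where "(\<alpha>, \<beta>) \<in> D" "I \<in> SS" "x = \<alpha> *\<^sub>R ebas 0 + \<beta> *\<^sub>R I"
    unfolding OmegaD_def by blast
  moreover have "(\<alpha>, \<bar>\<beta>\<bar>) \<in> D"
    using \<open>(\<alpha>, \<beta>) \<in> D\<close> sym by (cases "\<beta> \<ge> 0") auto
  ultimately show "(comp x 0, norm (oIm x)) \<in> D"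
    by (simp add: SS_iff comp_ebas oIm_add oIm_scaleR oIm_eq_self)
next
  assume D: "(comp x 0, norm (oIm x)) \<in> D"
  obtain I where "I \<in> SS" and I: "oIm x = norm (oIm x) *\<^sub>R I"
  proof (cases "oIm x = 0")
    case True
    then show ?thesis
      by (intro that[of "ebas 1"]) (simp_all add: SS_iff comp_ebas)
  next
    case False
    then show ?thesis
      by (intro that[of "(1 / norm (oIm x)) *\<^sub>R oIm x"]) (simp_all add: SS_iff)
  qed
  then show "x \<in> OmegaD D"
    using D oct_Re_Im_decomp[of x] unfolding OmegaD_def
    by (metis (mono_tags, lifting) mem_Collect_eq)
qed

lemma imag_sphere_subset_OmegaD_minus_oreals:
  assumes "\<And>\<alpha> \<beta>. (\<alpha>, \<beta>) \<in> D \<Longrightarrow> (\<alpha>, - \<beta>) \<in> D" and "(\<alpha>, r) \<in> D" and "r > 0"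
  shows "imag_sphere \<alpha> r \<subseteq> OmegaD D - oreals"
  using assms by (auto simp: imag_sphere_def mem_OmegaD_iff mem_oreals_iff)

lemma slice_function_on_imag_sphere:
  assumes "\<And>\<alpha> \<beta> I. (\<alpha>, \<beta>) \<in> D \<Longrightarrow> I \<in> SS \<Longrightarrow>
      f (\<alpha> *\<^sub>R ebas 0 + \<beta> *\<^sub>R I) = F1 (\<alpha>, \<beta>) + omul I (F2 (\<alpha>, \<beta>))"
    and "(\<alpha>, r) \<in> D" and "r > 0" and "w \<in> imag_sphere \<alpha> r"
  shows "f w = F1 (\<alpha>, r) + omul (oIm w) ((1 / r) *\<^sub>R F2 (\<alpha>, r))"
proof -
  define I where "I = (1 / r) *\<^sub>R oIm w"
  have "I \<in> SS" and "w = \<alpha> *\<^sub>R ebas 0 + r *\<^sub>R I"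
    using assms(3,4) oct_Re_Im_decomp[of w] by (auto simp: I_def SS_iff imag_sphere_def)
  then have "f w = F1 (\<alpha>, r) + omul I (F2 (\<alpha>, r))"
    using assms(1,2) by metis
  then show ?thesis
    by (simp add: I_def omul.scaleR_left omul.scaleR_right)
qed

lemma Lop_eq_0_if_slice_function:
  assumes sym: "\<And>\<alpha> \<beta>. (\<alpha>, \<beta>) \<in> D \<Longrightarrow> (\<alpha>, - \<beta>) \<in> D"
    and "slice_function D f"
    and f_diff: "\<And>x. x \<in> OmegaD D \<Longrightarrow> f differentiable (at x)"
    and pd_diff: "\<And>i x. i < 8 \<Longrightarrow> x \<in> OmegaD D \<Longrightarrow> pd i f differentiable (at x)"
    and x: "x \<in> OmegaD D - oreals" and mn: "1 \<le> m" "m < n" "n \<le> 7"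
  shows "Lop m n (\<lambda>y. omul (oinv (oIm y)) (Gamma f y)) x = 0
    \<and> Lop m n (\<lambda>y. f y - (1/6) *\<^sub>R Gamma f y) x = 0"
proof -
  obtain F1 F2 where rep: "\<And>\<alpha> \<beta> I. (\<alpha>, \<beta>) \<in> D \<Longrightarrow> I \<in> SS \<Longrightarrow>
      f (\<alpha> *\<^sub>R ebas 0 + \<beta> *\<^sub>R I) = F1 (\<alpha>, \<beta>) + omul I (F2 (\<alpha>, \<beta>))"
    using assms(2) unfolding slice_function_def by blast
  define \<alpha> r where "\<alpha> = comp x 0" and "r = norm (oIm x)"
  define X where "X = (1 / r) *\<^sub>R F2 (\<alpha>, r)"
  have D: "(\<alpha>, r) \<in> D" and r: "r > 0"
    using x by (auto simp: \<alpha>_def r_def mem_OmegaD_iff[OF sym] mem_oreals_iff)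
  have S: "imag_sphere \<alpha> r \<subseteq> OmegaD D - oreals" and x_S: "x \<in> imag_sphere \<alpha> r"
    using imag_sphere_subset_OmegaD_minus_oreals[OF sym D r]
    by (auto simp: imag_sphere_def \<alpha>_def r_def)
  have f_S: "f y = F1 (\<alpha>, r) + omul (oIm y) X" if "y \<in> imag_sphere \<alpha> r" for y
    using slice_function_on_imag_sphere[OF rep D r that] by (simp add: X_def)
  have "omul (oinv (oIm y)) (Gamma f y) = 6 *\<^sub>R X \<and> f y - (1/6) *\<^sub>R Gamma f y = F1 (\<alpha>, r)"
    if y: "y \<in> imag_sphere \<alpha> r" for y
  proof -
    have "Gamma f y = 6 *\<^sub>R omul (oIm y) X"
      using Gamma_eq_on_imag_sphere[OF _ f_S y] f_diff S by blast
    moreover have "oIm y \<noteq> 0"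
      using y S by (auto simp: mem_oreals_iff)
    ultimately show ?thesis
      using f_S[OF y] by (simp add: omul.scaleR_right omul_oinv_imag)
  qed
  moreover have "x \<in> OmegaD D" and "oIm x \<noteq> 0" and "\<And>i. i < 8 \<Longrightarrow> pd i f differentiable (at x)"
    using x pd_diff by (auto simp: mem_oreals_iff)
  ultimately show ?thesis
    using mn x_S Lop_eq_if_eq_on_imag_sphere[of m n x \<alpha> r _ "\<lambda>_. _"]
    by (simp add: differentiable_Im_inverse_Gamma differentiable_minus_Gamma f_diff)
qed

lemma slice_function_if_const_on_imag_spheres:
  assumes sym: "\<And>\<alpha> \<beta>. (\<alpha>, \<beta>) \<in> D \<Longrightarrow> (\<alpha>, - \<beta>) \<in> D"
    and decomp: "\<And>y. y \<in> OmegaD D - oreals \<Longrightarrow> f y = G1 y + omul (oIm y) (G2 y)"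
    and const: "\<And>\<alpha> r y. (\<alpha>, r) \<in> D \<Longrightarrow> r > 0 \<Longrightarrow> y \<in> imag_sphere \<alpha> r \<Longrightarrow>
      G1 y = G1 (\<alpha> *\<^sub>R ebas 0 + r *\<^sub>R ebas 1) \<and> G2 y = G2 (\<alpha> *\<^sub>R ebas 0 + r *\<^sub>R ebas 1)"
  shows "slice_function D f"
proof -
  define F1 where "F1 = (\<lambda>(\<alpha>, \<beta>).
    if \<beta> = 0 then f (\<alpha> *\<^sub>R ebas 0) else G1 (\<alpha> *\<^sub>R ebas 0 + \<bar>\<beta>\<bar> *\<^sub>R ebas 1))"
  define F2 where "F2 = (\<lambda>(\<alpha>, \<beta>). \<beta> *\<^sub>R G2 (\<alpha> *\<^sub>R ebas 0 + \<bar>\<beta>\<bar> *\<^sub>R ebas 1))"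
  have "f (\<alpha> *\<^sub>R ebas 0 + \<beta> *\<^sub>R I) = F1 (\<alpha>, \<beta>) + omul I (F2 (\<alpha>, \<beta>))"
    if D: "(\<alpha>, \<beta>) \<in> D" and I: "I \<in> SS" for \<alpha> \<beta> I
  proof (cases "\<beta> = 0")
    case True
    then show ?thesis by (simp add: F1_def F2_def omul.zero_right)
  next
    case False
    define y where "y = \<alpha> *\<^sub>R ebas 0 + \<beta> *\<^sub>R I"
    have Im_y: "oIm y = \<beta> *\<^sub>R I"
      using I by (simp add: y_def SS_iff oIm_add oIm_scaleR oIm_eq_self)
    have "(\<alpha>, \<bar>\<beta>\<bar>) \<in> D"
      using D sym by (cases "\<beta> \<ge> 0") auto
    moreover have "y \<in> imag_sphere \<alpha> \<bar>\<beta>\<bar>"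
      using I Im_y by (simp add: imag_sphere_def y_def SS_iff comp_ebas)
    moreover have "\<bar>\<beta>\<bar> > 0"
      using False by simp
    ultimately have "y \<in> OmegaD D - oreals"
      and "G1 y = G1 (\<alpha> *\<^sub>R ebas 0 + \<bar>\<beta>\<bar> *\<^sub>R ebas 1) \<and> G2 y = G2 (\<alpha> *\<^sub>R ebas 0 + \<bar>\<beta>\<bar> *\<^sub>R ebas 1)"
      using imag_sphere_subset_OmegaD_minus_oreals[OF sym] const by blast+
    then have "f y = G1 (\<alpha> *\<^sub>R ebas 0 + \<bar>\<beta>\<bar> *\<^sub>R ebas 1)
        + omul (\<beta> *\<^sub>R I) (G2 (\<alpha> *\<^sub>R ebas 0 + \<bar>\<beta>\<bar> *\<^sub>R ebas 1))"
      using decomp[of y] Im_y by simp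
    then show ?thesis
      using False by (simp add: y_def F1_def F2_def omul.scaleR_left omul.scaleR_right)
  qed
  then show ?thesis
    unfolding slice_function_def by (intro exI[of _ F1] exI[of _ F2]) (simp add: F1_def F2_def)
qed

lemma slice_function_if_Lop_eq_0:
  assumes sym: "\<And>\<alpha> \<beta>. (\<alpha>, \<beta>) \<in> D \<Longrightarrow> (\<alpha>, - \<beta>) \<in> D"
    and f_diff: "\<And>x. x \<in> OmegaD D \<Longrightarrow> f differentiable (at x)"
    and pd_diff: "\<And>i x. i < 8 \<Longrightarrow> x \<in> OmegaD D \<Longrightarrow> pd i f differentiable (at x)"
    and Lop: "\<And>x m n. x \<in> OmegaD D - oreals \<Longrightarrow> 1 \<le> m \<Longrightarrow> m < n \<Longrightarrow> n \<le> 7 \<Longrightarrow>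
      Lop m n (\<lambda>y. omul (oinv (oIm y)) (Gamma f y)) x = 0
      \<and> Lop m n (\<lambda>y. f y - (1/6) *\<^sub>R Gamma f y) x = 0"
  shows "slice_function D f"
proof -
  define g1 where "g1 y = f y - (1/6) *\<^sub>R Gamma f y" for y
  define g2 where "g2 y = omul (oinv (oIm y)) (Gamma f y)" for y
  have const: "g y = g (\<alpha> *\<^sub>R ebas 0 + r *\<^sub>R ebas 1)"
    if "(\<alpha>, r) \<in> D" "r > 0" "y \<in> imag_sphere \<alpha> r"
      and "\<And>z n. z \<in> OmegaD D - oreals \<Longrightarrow> 2 \<le> n \<Longrightarrow> n \<le> 7 \<Longrightarrow> g differentiable (at z) \<and> Lop 1 n g z = 0"
    for g \<alpha> r y
    using that imag_sphere_subset_OmegaD_minus_oreals[OF sym that(1,2)]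
    by (intro const_on_imag_sphere_if_Lop_eq_0) auto
  have g1: "g1 differentiable (at z) \<and> Lop 1 n g1 z = 0"
    and g2: "g2 differentiable (at z) \<and> Lop 1 n g2 z = 0"
    if "z \<in> OmegaD D - oreals" "2 \<le> n" "n \<le> 7" for z n
    using that f_diff pd_diff Lop[of z 1 n] unfolding g1_def[abs_def] g2_def[abs_def]
    by (auto simp: mem_oreals_iff intro: differentiable_minus_Gamma differentiable_Im_inverse_Gamma)
  show ?thesis
  proof (rule slice_function_if_const_on_imag_spheres[OF sym])
    fix y assume "y \<in> OmegaD D - oreals"
    then show "f y = g1 y + omul (oIm y) ((1/6) *\<^sub>R g2 y)"
      by (simp add: g1_def g2_def mem_oreals_iff omul.scaleR_right omul_oinv_imag)
  next
    fix \<alpha> r y assume "(\<alpha>, r) \<in> D" "r > 0" "y \<in> imag_sphere \<alpha> r"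
    then show "g1 y = g1 (\<alpha> *\<^sub>R ebas 0 + r *\<^sub>R ebas 1)
        \<and> (1/6) *\<^sub>R g2 y = (1/6) *\<^sub>R g2 (\<alpha> *\<^sub>R ebas 0 + r *\<^sub>R ebas 1)"
      using const[where g = g1, OF _ _ _ g1] const[where g = g2, OF _ _ _ g2] by simp
  qed
qed

theorem lemma2p13:
  fixes D :: "(real \<times> real) set" and f :: "oct \<Rightarrow> oct"
  assumes "open D" and "D \<noteq> {}"
    and "\<And>\<alpha> \<beta>. (\<alpha>, \<beta>) \<in> D \<Longrightarrow> (\<alpha>, - \<beta>) \<in> D"
    and "connected (OmegaD D)"
    and "C2_on (OmegaD D) f"
  shows "slice_function D f \<longleftrightarrow>
    (\<forall>x \<in> OmegaD D - oreals. \<forall>m n. 1 \<le> m \<longrightarrow> m < n \<longrightarrow> n \<le> 7 \<longrightarrow>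
        Lop m n (\<lambda>y. omul (oinv (oIm y)) (Gamma f y)) x = 0 \<and>
        Lop m n (\<lambda>y. f y - (1/6) *\<^sub>R Gamma f y) x = 0)"
proof -
  have diff: "\<And>x. x \<in> OmegaD D \<Longrightarrow> f differentiable (at x)"
    "\<And>i x. i < 8 \<Longrightarrow> x \<in> OmegaD D \<Longrightarrow> pd i f differentiable (at x)"
    using assms(5) unfolding C2_on_def by auto
  show ?thesis
  proof
    assume "slice_function D f"
    then show "\<forall>x \<in> OmegaD D - oreals. \<forall>m n. 1 \<le> m \<longrightarrow> m < n \<longrightarrow> n \<le> 7 \<longrightarrow>
        Lop m n (\<lambda>y. omul (oinv (oIm y)) (Gamma f y)) x = 0 \<and>
        Lop m n (\<lambda>y. f y - (1/6) *\<^sub>R Gamma f y) x = 0"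
      using Lop_eq_0_if_slice_function[OF assms(3) _ diff] by blast
  qed (use slice_function_if_Lop_eq_0[OF assms(3) diff] in blast)
qed

end
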